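(* Let $F(x,y)=(f(x,y),x,y)$ be a germ at $o=(0,0)$ of a $C^3$ map into $\mathbf{R}^3_1$ with $f(0,0)=0$, $f_x(0,0)=0$, $f_y(0,0)=1$, such that the set $\{B_F\neq 0\}$ is open and dense in the domain and $A_F-\varphi B_F^2\equiv0$ for some $C^1$ function germ $\varphi$ at $o$. Then the light-like point $o$ is not an isolated point of the set of light-like points $\{B_F=0\}$.
   Context: $\mathbf{R}^3_1$ is Lorentz–Minkowski 3-space with coordinates $(t,x,y)$ and inner product $-dt^2+dx^2+dy^2$. $B_F:=1-f_x^2-f_y^2$, $A_F:=(1-f_x^2)f_{yy}+2f_xf_yf_{xy}+(1-f_y^2)f_{xx}$. A point $p$ is light-like if $B_F(p)=0$. *)

theory Defs
  imports "HOL-Analysis.Analysis"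
begin

definition px :: "(real \<times> real \<Rightarrow> real) \<Rightarrow> real \<times> real \<Rightarrow> real" where
  "px f = (\<lambda>(x, y). deriv (\<lambda>t. f (t, y)) x)"

definition py :: "(real \<times> real \<Rightarrow> real) \<Rightarrow> real \<times> real \<Rightarrow> real" where
  "py f = (\<lambda>(x, y). deriv (\<lambda>t. f (x, t)) y)"

fun Ck :: "nat \<Rightarrow> (real \<times> real \<Rightarrow> real) \<Rightarrow> (real \<times> real) set \<Rightarrow> bool" where
  "Ck 0 f U = continuous_on U f"
| "Ck (Suc k) f U = (continuous_on U f \<and> (\<forall>p\<in>U. f differentiable (at p))
      \<and> Ck k (px f) U \<and> Ck k (py f) U)"

definition BF :: "(real \<times> real \<Rightarrow> real) \<Rightarrow> real \<times> real \<Rightarrow> real" where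
  "BF f p = 1 - (px f p)^2 - (py f p)^2"

definition AF :: "(real \<times> real \<Rightarrow> real) \<Rightarrow> real \<times> real \<Rightarrow> real" where
  "AF f p = (1 - (px f p)^2) * py (py f) p + 2 * px f p * py f p * py (px f) p
            + (1 - (py f p)^2) * px (px f) p"

end

theory Submission
  imports Defs
begin

text \<open>Write P = f_x and Q = f_y, so that B_F = 1 - P^2 - Q^2. By the symmetry f_xy = f_yx, the
  derivative of B_F in the direction of the gradient field (P, Q) is a combination of second
  derivatives that the hypothesis A_F = \<phi> B_F^2 turns into the linear transport equation
  D B_F (P, Q) = (2 (f_xx + f_yy) - 2 \<phi> B_F) B_F. As (P, Q)(o) = (0, 1) is nonzero and B_F(o) = 0,
  B_F vanishes along the integral curve of (P, Q) through o, which leaves o.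
  No existence theorem for ODEs is needed: if o were an isolated zero, |B_F| would have a positive
  lower bound on a compact part of a small disc lying ahead of o in the direction (P, Q)(o), while a
  discrete Gronwall estimate shows that Euler polygons of (P, Q) starting at o reach that part with
  |B_F| arbitrarily small.\<close>

lemma has_real_derivative_px:
  assumes "g differentiable (at (x, y))"
  shows "((\<lambda>t. g (t, y)) has_real_derivative px g (x, y)) (at x)"
proof -
  have "(g \<circ> (\<lambda>t. (t, y))) differentiable (at x)"
    using assms by (intro differentiable_chain_at) (auto intro: derivative_intros)
  then show ?thesis
    by (simp add: px_def o_def DERIV_deriv_iff_real_differentiable)
qed

lemma has_real_derivative_py:
  assumes "g differentiable (at (x, y))"
  shows "((\<lambda>t. g (x, t)) has_real_derivative py g (x, y)) (at y)"
proof -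
  have "(g \<circ> (\<lambda>t. (x, t))) differentiable (at y)"
    using assms by (intro differentiable_chain_at) (auto intro: derivative_intros)
  then show ?thesis
    by (simp add: py_def o_def DERIV_deriv_iff_real_differentiable)
qed

lemma has_derivative_partials:
  assumes "g differentiable (at p)"
  shows "(g has_derivative (\<lambda>v. fst v * px g p + snd v * py g p)) (at p)"
proof -
  obtain x y where p: "p = (x, y)" by (cases p)
  obtain D where D: "(g has_derivative D) (at p)"
    using assms by (auto simp: differentiable_def)
  interpret D: linear D using has_derivative_linear[OF D] .
  have "((\<lambda>t. (t, y)) has_derivative (\<lambda>t. (t, 0))) (at x)"
    by (auto intro!: derivative_eq_intros)
  then have "((g \<circ> (\<lambda>t. (t, y))) has_derivative (D \<circ> (\<lambda>t. (t, 0)))) (at x)"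
    using D p by (auto intro: diff_chain_at)
  then have "D \<circ> (\<lambda>t. (t, 0)) = (*) (px g p)"
    using has_derivative_unique has_real_derivative_px[of g x y] assms p
    by (simp add: has_field_derivative_def comp_def)
  then have Dx: "D (1, 0) = px g p" by (metis comp_apply mult_1_right)
  have "((\<lambda>t. (x, t)) has_derivative (\<lambda>t. (0, t))) (at y)"
    by (auto intro!: derivative_eq_intros)
  then have "((g \<circ> (\<lambda>t. (x, t))) has_derivative (D \<circ> (\<lambda>t. (0, t)))) (at y)"
    using D p by (auto intro: diff_chain_at)
  then have "D \<circ> (\<lambda>t. (0, t)) = (*) (py g p)"
    using has_derivative_unique has_real_derivative_py[of g x y] assms p
    by (simp add: has_field_derivative_def comp_def)
  then have Dy: "D (0, 1) = py g p" by (metis comp_apply mult_1_right)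
  have "D = (\<lambda>v. fst v * px g p + snd v * py g p)"
  proof
    fix v :: "real \<times> real"
    have "D v = D (fst v *\<^sub>R (1, 0) + snd v *\<^sub>R (0, 1))" by (cases v) simp
    also have "\<dots> = fst v * D (1, 0) + snd v * D (0, 1)" by (simp only: D.add D.scale) simp
    finally show "D v = fst v * px g p + snd v * py g p" using Dx Dy by simp
  qed
  then show ?thesis using D by simp
qed

lemma mixed_difference_mvt:
  fixes g g\<^sub>1 g\<^sub>1\<^sub>2 :: "real \<Rightarrow> real \<Rightarrow> real"
  assumes "h > 0"
    and "\<And>s t. s \<in> {x..x+h} \<Longrightarrow> t \<in> {y..y+h} \<Longrightarrow> ((\<lambda>s. g s t) has_real_derivative g\<^sub>1 s t) (at s)"
    and "\<And>s t. s \<in> {x..x+h} \<Longrightarrow> t \<in> {y..y+h} \<Longrightarrow> ((\<lambda>t. g\<^sub>1 s t) has_real_derivative g\<^sub>1\<^sub>2 s t) (at t)"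
  shows "\<exists>\<xi>\<in>{x<..<x+h}. \<exists>\<eta>\<in>{y<..<y+h}.
           g (x+h) (y+h) - g (x+h) y - g x (y+h) + g x y = h * h * g\<^sub>1\<^sub>2 \<xi> \<eta>"
proof -
  have "((\<lambda>s. g s (y+h) - g s y) has_real_derivative g\<^sub>1 s (y+h) - g\<^sub>1 s y) (at s)"
    if "x \<le> s" "s \<le> x + h" for s
    using that assms by (intro DERIV_diff) auto
  then obtain \<xi> where \<xi>: "x < \<xi>" "\<xi> < x + h"
    and "(g (x+h) (y+h) - g (x+h) y) - (g x (y+h) - g x y) = h * (g\<^sub>1 \<xi> (y+h) - g\<^sub>1 \<xi> y)"
    using MVT2[of x "x + h" "\<lambda>s. g s (y+h) - g s y" "\<lambda>s. g\<^sub>1 s (y+h) - g\<^sub>1 s y"] \<open>h > 0\<close>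
    by auto
  moreover obtain \<eta> where \<eta>: "y < \<eta>" "\<eta> < y + h" "g\<^sub>1 \<xi> (y+h) - g\<^sub>1 \<xi> y = h * g\<^sub>1\<^sub>2 \<xi> \<eta>"
    using MVT2[of y "y + h" "g\<^sub>1 \<xi>" "g\<^sub>1\<^sub>2 \<xi>"] assms \<xi> by auto
  ultimately have "g (x+h) (y+h) - g (x+h) y - g x (y+h) + g x y = h * h * g\<^sub>1\<^sub>2 \<xi> \<eta>"
    by (simp add: algebra_simps)
  then show ?thesis
    using \<xi> \<eta> by (rule_tac bexI[of _ \<xi>], rule_tac bexI[of _ \<eta>]) auto
qed

lemma eventually_nhds_continuous_on:
  fixes F :: "'a::metric_space \<Rightarrow> 'b::metric_space"
  assumes "open U" "p \<in> U" "continuous_on U F" "e > 0"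
  shows "\<forall>\<^sub>F q in nhds p. dist (F q) (F p) < e"
proof -
  have "isCont F p" using assms continuous_on_eq_continuous_at by blast
  then have "(F \<longlongrightarrow> F p) (nhds p)" by (simp add: tendsto_nhds_iff isCont_def)
  then show ?thesis using \<open>e > 0\<close> by (rule tendstoD)
qed

lemma py_px_eq_px_py:
  fixes f :: "real \<times> real \<Rightarrow> real"
  assumes U: "open U" "p \<in> U"
    and f: "\<And>q. q \<in> U \<Longrightarrow> f differentiable (at q)"
    and fx: "\<And>q. q \<in> U \<Longrightarrow> px f differentiable (at q)"
    and fy: "\<And>q. q \<in> U \<Longrightarrow> py f differentiable (at q)"
    and fxy: "continuous_on U (py (px f))" and fyx: "continuous_on U (px (py f))"
  shows "py (px f) p = px (py f) p"
proof -
  obtain x y where p: "p = (x, y)" by (cases p)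
  have "\<bar>py (px f) p - px (py f) p\<bar> \<le> 0 + \<epsilon>" if "\<epsilon> > 0" for \<epsilon>
  proof -
    have "\<forall>\<^sub>F q in nhds p. q \<in> U \<and> dist (py (px f) q) (py (px f) p) < \<epsilon>/2
                          \<and> dist (px (py f) q) (px (py f) p) < \<epsilon>/2"
      using U fxy fyx \<open>\<epsilon> > 0\<close>
      by (intro eventually_conj eventually_nhds_in_open eventually_nhds_continuous_on) auto
    then obtain \<rho> where "\<rho> > 0" and near: "\<And>q. dist q p < \<rho> \<Longrightarrow> q \<in> U
         \<and> \<bar>py (px f) q - py (px f) p\<bar> < \<epsilon>/2 \<and> \<bar>px (py f) q - px (py f) p\<bar> < \<epsilon>/2"
      by (auto simp: eventually_nhds_metric dist_real_def)
    define h where "h = \<rho> / 4"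
    have "h > 0" using \<open>\<rho> > 0\<close> by (simp add: h_def)
    have box: "dist (s, t) p < \<rho>" if "s \<in> {x..x+h}" "t \<in> {y..y+h}" for s t
    proof -
      have "dist (s, t) p \<le> \<bar>s - x\<bar> + \<bar>t - y\<bar>"
        using norm_Pair_le[of "s - x" "t - y"] by (simp add: p dist_norm)
      also have "\<dots> < \<rho>" using that \<open>\<rho> > 0\<close> by (auto simp: h_def)
      finally show ?thesis .
    qed
    have inU: "(s, t) \<in> U" if "s \<in> {x..x+h}" "t \<in> {y..y+h}" for s t
      using near box that by blast
    obtain \<xi> \<eta> where \<xi>\<eta>: "\<xi> \<in> {x<..<x+h}" "\<eta> \<in> {y<..<y+h}"
      and "f (x+h, y+h) - f (x+h, y) - f (x, y+h) + f (x, y) = h * h * py (px f) (\<xi>, \<eta>)"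
      using mixed_difference_mvt[of h x y "\<lambda>s t. f (s, t)" "\<lambda>s t. px f (s, t)" "\<lambda>s t. py (px f) (s, t)"]
        \<open>h > 0\<close> inU f fx has_real_derivative_px has_real_derivative_py by blast
    moreover obtain \<eta>' \<xi>' where \<xi>'\<eta>': "\<eta>' \<in> {y<..<y+h}" "\<xi>' \<in> {x<..<x+h}"
      and "f (x+h, y+h) - f (x, y+h) - f (x+h, y) + f (x, y) = h * h * px (py f) (\<xi>', \<eta>')"
      using mixed_difference_mvt[of h y x "\<lambda>t s. f (s, t)" "\<lambda>t s. py f (s, t)" "\<lambda>t s. px (py f) (s, t)"]
        \<open>h > 0\<close> inU f fy has_real_derivative_px has_real_derivative_py by blast
    ultimately have "h * h * py (px f) (\<xi>, \<eta>) = h * h * px (py f) (\<xi>', \<eta>')"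
      by linarith
    then have "py (px f) (\<xi>, \<eta>) = px (py f) (\<xi>', \<eta>')"
      using \<open>h > 0\<close> by simp
    moreover have "\<bar>py (px f) (\<xi>, \<eta>) - py (px f) p\<bar> < \<epsilon>/2" "\<bar>px (py f) (\<xi>', \<eta>') - px (py f) p\<bar> < \<epsilon>/2"
      using near box \<xi>\<eta> \<xi>'\<eta>' by auto
    ultimately show ?thesis by linarith
  qed
  then have "\<bar>py (px f) p - px (py f) p\<bar> \<le> 0" by (rule field_le_epsilon)
  then show ?thesis by simp
qed

lemma discrete_gronwall:
  fixes x :: "nat \<Rightarrow> real"
  assumes "x 0 = 0" "h \<ge> 0" "K \<ge> 0" "C \<ge> 0"
    and step: "\<And>k. k < n \<Longrightarrow> x (Suc k) \<le> (1 + h * K) * x k + h * C"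
  shows "x n \<le> n * h * C * exp (K * n * h)"
  using step
proof (induction n)
  case 0
  then show ?case using \<open>x 0 = 0\<close> by simp
next
  case (Suc n)
  define E where "E = real n * h * C * exp (K * n * h)"
  have "x (Suc n) \<le> (1 + h * K) * x n + h * C" using Suc.prems by simp
  also have "\<dots> \<le> (1 + h * K) * E + h * C"
    using Suc assms by (intro add_right_mono mult_left_mono) (auto simp: E_def)
  also have "\<dots> \<le> exp (h * K) * E + h * C * exp (K * Suc n * h)"
  proof (intro add_mono mult_right_mono)
    show "h * C \<le> h * C * exp (K * Suc n * h)"
      using assms mult_left_mono[of 1 "exp (K * Suc n * h)" "h * C"] by simp
  qed (use assms in \<open>auto simp: E_def exp_ge_add_one_self\<close>)
  also have "\<dots> = Suc n * h * C * exp (K * Suc n * h)"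
    by (simp add: E_def algebra_simps flip: exp_add)
  finally show ?case .
qed

lemma euler_polygon_advances:
  fixes W :: "'a::real_inner \<Rightarrow> 'a"
  assumes "h \<ge> 0" "M \<ge> 0" "real n * h * M \<le> r"
    and W: "\<And>z. z \<in> cball p r \<Longrightarrow> norm (W z) \<le> M \<and> \<mu> \<le> W z \<bullet> u"
  shows "((\<lambda>z. z + h *\<^sub>R W z) ^^ n) p \<in> cball p (real n * h * M)
      \<and> real n * h * \<mu> \<le> (((\<lambda>z. z + h *\<^sub>R W z) ^^ n) p - p) \<bullet> u"
  using assms(3)
proof (induction n)
  case 0
  then show ?case by simp
next
  case (Suc n)
  define z where "z = ((\<lambda>z. z + h *\<^sub>R W z) ^^ n) p"
  have "real (Suc n) * h * M = real n * h * M + h * M" by (simp add: algebra_simps)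
  then have "real n * h * M \<le> r"
    using Suc.prems mult_nonneg_nonneg[OF \<open>h \<ge> 0\<close> \<open>M \<ge> 0\<close>] by linarith
  then have IH: "z \<in> cball p (real n * h * M)" "real n * h * \<mu> \<le> (z - p) \<bullet> u"
    using Suc.IH by (auto simp: z_def)
  then have "norm (W z) \<le> M" "\<mu> \<le> W z \<bullet> u"
    using W \<open>real n * h * M \<le> r\<close> by auto
  have "dist p (z + h *\<^sub>R W z) \<le> dist p z + norm (h *\<^sub>R W z)"
    by (metis dist_norm dist_triangle2 add_diff_cancel_left' norm_minus_commute)
  also have "\<dots> \<le> real n * h * M + h * M"
    using IH(1) \<open>norm (W z) \<le> M\<close> \<open>h \<ge> 0\<close> by (intro add_mono) (auto intro: mult_left_mono)
  finally have "z + h *\<^sub>R W z \<in> cball p (real (Suc n) * h * M)"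
    by (simp add: algebra_simps)
  moreover have "real (Suc n) * h * \<mu> \<le> (z + h *\<^sub>R W z - p) \<bullet> u"
    using IH(2) \<open>\<mu> \<le> W z \<bullet> u\<close> \<open>h \<ge> 0\<close> mult_left_mono
    by (fastforce simp: algebra_simps inner_diff_left inner_add_left)
  ultimately show ?case by (simp add: z_def)
qed

lemma euler_step_bound:
  fixes B :: "'a::real_normed_vector \<Rightarrow> real" and B' :: "'a \<Rightarrow> 'a \<Rightarrow>\<^sub>L real"
  assumes "h > 0" "convex K" "z \<in> K" "z + h *\<^sub>R W z \<in> K" "norm (W z) \<le> M"
    and der: "\<And>q. q \<in> K \<Longrightarrow> (B has_derivative B' q) (at q)"
    and transport: "\<And>q. q \<in> K \<Longrightarrow> B' q (W q) = c q * B q"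
    and c: "\<And>q. q \<in> K \<Longrightarrow> \<bar>c q\<bar> \<le> Kc" and B': "\<And>q. q \<in> K \<Longrightarrow> norm (B' q) \<le> G"
    and near: "\<And>q. q \<in> K \<Longrightarrow> dist q z \<le> h * M \<Longrightarrow> norm (W q - W z) \<le> \<epsilon> \<and> \<bar>B q - B z\<bar> \<le> \<epsilon>"
  shows "\<bar>B (z + h *\<^sub>R W z)\<bar> \<le> (1 + h * Kc) * \<bar>B z\<bar> + h * ((Kc + G) * \<epsilon>)"
proof -
  define w where "w = W z"
  have seg: "z + s *\<^sub>R w \<in> K" "dist (z + s *\<^sub>R w) z \<le> h * M" if "0 \<le> s" "s \<le> h" for s
  proof -
    have "(1 - s / h) *\<^sub>R z + (s / h) *\<^sub>R (z + h *\<^sub>R w) \<in> K"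
      using assms(1-4) that by (intro convexD) (auto simp: w_def)
    then show "z + s *\<^sub>R w \<in> K" using \<open>h > 0\<close> by (simp add: algebra_simps)
    show "dist (z + s *\<^sub>R w) z \<le> h * M"
      using that assms(5) by (simp add: dist_norm w_def mult_mono)
  qed
  have "((\<lambda>s. B (z + s *\<^sub>R w)) has_real_derivative B' (z + s *\<^sub>R w) w) (at s)"
    if "0 \<le> s" "s \<le> h" for s
  proof -
    have "((\<lambda>s. z + s *\<^sub>R w) has_derivative (\<lambda>s. s *\<^sub>R w)) (at s)"
      by (auto intro!: derivative_eq_intros)
    then have "((B \<circ> (\<lambda>s. z + s *\<^sub>R w)) has_derivative (B' (z + s *\<^sub>R w) \<circ> (\<lambda>s. s *\<^sub>R w))) (at s)"
      using der seg that by (auto intro: diff_chain_at)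
    then show ?thesis
      by (simp add: has_field_derivative_def comp_def blinfun.scaleR_right mult_commute_abs)
  qed
  then obtain s where s: "0 < s" "s < h" "B (z + h *\<^sub>R w) - B z = h * B' (z + s *\<^sub>R w) w"
    using MVT2[of 0 h "\<lambda>s. B (z + s *\<^sub>R w)" "\<lambda>s. B' (z + s *\<^sub>R w) w"] \<open>h > 0\<close> by auto
  define q where "q = z + s *\<^sub>R w"
  have q: "q \<in> K" "norm (W q - w) \<le> \<epsilon>" "\<bar>B q - B z\<bar> \<le> \<epsilon>"
    using seg[of s] near[of q] s by (auto simp: q_def w_def)
  have "0 \<le> \<epsilon>" "0 \<le> Kc" "0 \<le> G"
    using q c[of q] B'[of q] by (auto intro: order_trans[OF norm_ge_zero])
  have "B' q w = c q * B q + B' q (w - W q)"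
    using transport q by (simp add: blinfun.diff_right)
  moreover have "\<bar>c q * B q\<bar> \<le> Kc * (\<bar>B z\<bar> + \<epsilon>)"
    unfolding abs_mult using c q \<open>0 \<le> Kc\<close> by (intro mult_mono) auto
  moreover have "\<bar>B' q (w - W q)\<bar> \<le> G * \<epsilon>"
  proof -
    have "\<bar>B' q (w - W q)\<bar> \<le> norm (B' q) * norm (w - W q)"
      using norm_blinfun by (metis real_norm_def)
    also have "\<dots> \<le> G * \<epsilon>"
      using B' q \<open>0 \<le> G\<close> by (intro mult_mono) (auto simp: norm_minus_commute)
    finally show ?thesis .
  qed
  ultimately have "\<bar>B' q w\<bar> \<le> Kc * (\<bar>B z\<bar> + \<epsilon>) + G * \<epsilon>" by linarith
  then have "\<bar>B (z + h *\<^sub>R w) - B z\<bar> \<le> h * (Kc * (\<bar>B z\<bar> + \<epsilon>) + G * \<epsilon>)"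
    using s \<open>h > 0\<close> by (simp add: q_def abs_mult mult_left_mono)
  then show ?thesis by (simp add: w_def algebra_simps)
qed

lemma euler_polygon_reaches_small_value:
  fixes B :: "'a::euclidean_space \<Rightarrow> real" and B' :: "'a \<Rightarrow> 'a \<Rightarrow>\<^sub>L real"
  assumes "r > 0" "M > 0" "B p = 0" "\<epsilon> > 0"
    and W: "continuous_on (cball p r) W" and B': "continuous_on (cball p r) B'"
    and c: "continuous_on (cball p r) c"
    and der: "\<And>q. q \<in> cball p r \<Longrightarrow> (B has_derivative B' q) (at q)"
    and transport: "\<And>q. q \<in> cball p r \<Longrightarrow> B' q (W q) = c q * B q"
    and field: "\<And>q. q \<in> cball p r \<Longrightarrow> norm (W q) \<le> M \<and> \<mu> \<le> W q \<bullet> u"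
  shows "\<exists>q\<in>cball p r. r * \<mu> / M \<le> (q - p) \<bullet> u \<and> \<bar>B q\<bar> < \<epsilon>"
proof -
  define K where "K = cball p r"
  have "compact K" "convex K" by (simp_all add: K_def)
  obtain Kc where Kc: "Kc > 0" "\<And>q. q \<in> K \<Longrightarrow> \<bar>c q\<bar> \<le> Kc"
    using compact_imp_bounded[OF compact_continuous_image[OF c]] by (auto simp: K_def bounded_pos)
  obtain G where G: "G > 0" "\<And>q. q \<in> K \<Longrightarrow> norm (B' q) \<le> G"
    using compact_imp_bounded[OF compact_continuous_image[OF B']] by (auto simp: K_def bounded_pos)
  define T where "T = r / M"
  define D where "D = T * (Kc + G) * exp (Kc * T)"
  define \<epsilon>' where "\<epsilon>' = \<epsilon> / (D + 1)"
  have "D \<ge> 0" using \<open>r > 0\<close> \<open>M > 0\<close> Kc G by (simp add: D_def T_def)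
  then have "\<epsilon>' > 0" "D * \<epsilon>' < \<epsilon>"
    using \<open>\<epsilon> > 0\<close> by (auto simp: \<epsilon>'_def field_simps)
  have "continuous_on K B"
    using der by (intro has_derivative_continuous_on) (auto simp: K_def intro: has_derivative_at_withinI)
  then have "continuous_on K (\<lambda>q. (W q, B q))"
    using W by (intro continuous_on_Pair) (simp_all add: K_def)
  then have "uniformly_continuous_on K (\<lambda>q. (W q, B q))"
    using \<open>compact K\<close> by (rule compact_uniformly_continuous)
  then obtain \<delta> where "\<delta> > 0"
    and \<delta>: "\<forall>q\<in>K. \<forall>q'\<in>K. dist q' q < \<delta> \<longrightarrow> dist (W q', B q') (W q, B q) < \<epsilon>'"
    using \<open>\<epsilon>' > 0\<close> unfolding uniformly_continuous_on_def by blast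
  obtain N :: nat where "r / \<delta> < N" using reals_Archimedean2 by blast
  then have "N > 0" "r < N * \<delta>"
    using \<open>r > 0\<close> \<open>\<delta> > 0\<close> by (auto simp: field_simps intro: gr0I)
  define h where "h = T / N"
  have "h > 0" "N * h = T" "h * M < \<delta>"
    using \<open>r > 0\<close> \<open>M > 0\<close> \<open>N > 0\<close> \<open>r < N * \<delta>\<close> by (auto simp: h_def T_def field_simps)
  have near: "norm (W q' - W q) \<le> \<epsilon>' \<and> \<bar>B q' - B q\<bar> \<le> \<epsilon>'"
    if "q \<in> K" "q' \<in> K" "dist q' q \<le> h * M" for q q'
  proof -
    have "dist (W q', B q') (W q, B q) < \<epsilon>'" using \<delta> that \<open>h * M < \<delta>\<close> by simp
    then have "dist (W q') (W q) < \<epsilon>'" "dist (B q') (B q) < \<epsilon>'"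
      using dist_fst_le[of "(W q', B q')" "(W q, B q)"] dist_snd_le[of "(W q', B q')" "(W q, B q)"]
      by simp_all
    then show ?thesis by (simp add: dist_norm dist_real_def)
  qed
  define z where "z k = ((\<lambda>z. z + h *\<^sub>R W z) ^^ k) p" for k
  have z: "z k \<in> K \<and> k * h * \<mu> \<le> (z k - p) \<bullet> u" if "k \<le> N" for k
  proof -
    have "k * h * M \<le> N * h * M"
      using that \<open>h > 0\<close> \<open>M > 0\<close> by (intro mult_right_mono) auto
    then have "k * h * M \<le> r" using \<open>N * h = T\<close> \<open>M > 0\<close> by (simp add: T_def)
    then show ?thesis
      using euler_polygon_advances[of h M k r p W \<mu> u] field \<open>h > 0\<close> \<open>M > 0\<close>
      by (auto simp: K_def z_def)
  qed
  have "\<bar>B (z (Suc k))\<bar> \<le> (1 + h * Kc) * \<bar>B (z k)\<bar> + h * ((Kc + G) * \<epsilon>')" if "k < N" for k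
    using euler_step_bound[OF \<open>h > 0\<close> \<open>convex K\<close>, of "z k" W M B B' c Kc G \<epsilon>']
      z[of k] z[of "Suc k"] that field der transport Kc G near
    by (auto simp: z_def K_def)
  then have "\<bar>B (z N)\<bar> \<le> N * h * ((Kc + G) * \<epsilon>') * exp (Kc * N * h)"
    using \<open>h > 0\<close> Kc G \<open>\<epsilon>' > 0\<close> \<open>B p = 0\<close>
    by (intro discrete_gronwall[where x = "\<lambda>k. \<bar>B (z k)\<bar>"]) (auto simp: z_def)
  also have "\<dots> = D * \<epsilon>'" using \<open>N * h = T\<close> by (simp add: D_def mult.assoc mult.left_commute)
  finally show ?thesis
    using z[of N] \<open>N * h = T\<close> \<open>D * \<epsilon>' < \<epsilon>\<close> by (auto simp: K_def T_def)
qed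

lemma compact_nonvanishing_abs_bounded_below:
  fixes g :: "'a::topological_space \<Rightarrow> real"
  assumes "compact S" "continuous_on S g" "\<And>q. q \<in> S \<Longrightarrow> g q \<noteq> 0"
  shows "\<exists>m>0. \<forall>q\<in>S. m \<le> \<bar>g q\<bar>"
proof (cases "S = {}")
  case False
  have "continuous_on S (\<lambda>q. \<bar>g q\<bar>)" using assms(2) by (rule continuous_on_rabs)
  then obtain q\<^sub>0 where "q\<^sub>0 \<in> S" "\<forall>q\<in>S. \<bar>g q\<^sub>0\<bar> \<le> \<bar>g q\<bar>"
    using continuous_attains_inf[OF assms(1) False] by blast
  then show ?thesis using assms(3) by (intro exI[of _ "\<bar>g q\<^sub>0\<bar>"]) auto
qed (auto intro: exI[of _ 1])

lemma norm_inner_bounds_if_close: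
  fixes v w :: "'a::real_inner"
  assumes close: "norm (v - w) < norm w / 2"
  shows "norm v \<le> 2 * norm w \<and> (norm w)\<^sup>2 / 2 \<le> v \<bullet> w"
proof
  show "norm v \<le> 2 * norm w"
    using norm_triangle_ineq2[of v w] norm_ge_zero[of w] close by linarith
  have "v \<bullet> w = (norm w)\<^sup>2 + (v - w) \<bullet> w"
    by (simp add: inner_diff_left power2_norm_eq_inner)
  moreover have "\<bar>(v - w) \<bullet> w\<bar> \<le> norm (v - w) * norm w"
    by (rule Cauchy_Schwarz_ineq2)
  moreover have "norm (v - w) * norm w \<le> norm w / 2 * norm w"
    using close by (intro mult_right_mono) auto
  ultimately show "(norm w)\<^sup>2 / 2 \<le> v \<bullet> w" by (simp add: power2_eq_square abs_le_iff)
qed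

lemma zero_not_isolated_along_field:
  fixes B :: "'a::euclidean_space \<Rightarrow> real" and B' :: "'a \<Rightarrow> 'a \<Rightarrow>\<^sub>L real"
  assumes U: "open U" "p \<in> U" and "B p = 0" "W p \<noteq> 0"
    and W: "continuous_on U W" and B': "continuous_on U B'" and c: "continuous_on U c"
    and der: "\<And>q. q \<in> U \<Longrightarrow> (B has_derivative B' q) (at q)"
    and transport: "\<And>q. q \<in> U \<Longrightarrow> B' q (W q) = c q * B q"
  shows "p \<in> closure ({q \<in> U. B q = 0} - {p})"
proof (rule ccontr)
  assume "p \<notin> closure ({q \<in> U. B q = 0} - {p})"
  then obtain e where "e > 0" and isolated: "\<And>q. q \<in> U \<Longrightarrow> q \<noteq> p \<Longrightarrow> dist q p < e \<Longrightarrow> B q \<noteq> 0"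
    unfolding closure_approachable by blast
  define a where "a = norm (W p)"
  have "a > 0" using \<open>W p \<noteq> 0\<close> by (simp add: a_def)
  have "\<forall>\<^sub>F q in nhds p. q \<in> U \<and> dist (W q) (W p) < a / 2"
    using U W \<open>a > 0\<close> by (intro eventually_conj eventually_nhds_in_open eventually_nhds_continuous_on) auto
  then obtain r\<^sub>1 where "r\<^sub>1 > 0" and near: "\<And>q. dist q p < r\<^sub>1 \<Longrightarrow> q \<in> U \<and> norm (W q - W p) < a / 2"
    by (auto simp: eventually_nhds_metric dist_norm)
  define r where "r = min r\<^sub>1 e / 2"
  have "r > 0" using \<open>r\<^sub>1 > 0\<close> \<open>e > 0\<close> by (simp add: r_def)
  have near_r: "q \<in> U \<and> norm (W q - W p) < a / 2 \<and> dist q p < e" if "q \<in> cball p r" for q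
    using that near[of q] \<open>r\<^sub>1 > 0\<close> \<open>e > 0\<close> by (auto simp: r_def dist_commute)
  then have "cball p r \<subseteq> U" by blast
  have field: "norm (W q) \<le> 2 * a \<and> a\<^sup>2 / 2 \<le> W q \<bullet> W p" if "q \<in> cball p r" for q
    using near_r[OF that] unfolding a_def by (intro norm_inner_bounds_if_close) blast
  define S where "S = cball p r \<inter> {q. r * a / 4 \<le> (q - p) \<bullet> W p}"
  have "compact S"
    unfolding S_def
    by (intro compact_Int_closed compact_cball closed_Collect_le continuous_on_const
        continuous_on_inner continuous_on_diff continuous_on_id)
  moreover have "continuous_on S B"
  proof (rule continuous_on_subset)
    show "continuous_on U B"
      by (rule has_derivative_continuous_on[OF has_derivative_at_withinI[OF der]])
    show "S \<subseteq> U" using \<open>cball p r \<subseteq> U\<close> by (auto simp: S_def)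
  qed
  moreover have "B q \<noteq> 0" if "q \<in> S" for q
  proof -
    have "q \<noteq> p" using that mult_pos_pos[OF \<open>r > 0\<close> \<open>a > 0\<close>] by (auto simp: S_def)
    then show ?thesis using that near_r isolated by (auto simp: S_def)
  qed
  ultimately have "\<exists>m>0. \<forall>q\<in>S. m \<le> \<bar>B q\<bar>"
    by (rule compact_nonvanishing_abs_bounded_below)
  then obtain m where "m > 0" and m: "\<And>q. q \<in> S \<Longrightarrow> m \<le> \<bar>B q\<bar>"
    by blast
  have "\<exists>q\<in>cball p r. r * (a\<^sup>2 / 2) / (2 * a) \<le> (q - p) \<bullet> W p \<and> \<bar>B q\<bar> < m"
    using \<open>r > 0\<close> \<open>a > 0\<close> \<open>B p = 0\<close> \<open>m > 0\<close> field
  proof (intro euler_polygon_reaches_small_value)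
    show "continuous_on (cball p r) W" "continuous_on (cball p r) B'" "continuous_on (cball p r) c"
      using W B' c \<open>cball p r \<subseteq> U\<close> by (auto intro: continuous_on_subset)
  qed (use der transport \<open>cball p r \<subseteq> U\<close> in auto)
  moreover have "r * (a\<^sup>2 / 2) / (2 * a) = r * a / 4"
    using \<open>a > 0\<close> by (simp add: power2_eq_square)
  ultimately obtain q where "q \<in> S" "\<bar>B q\<bar> < m"
    unfolding S_def by (metis (no_types, lifting) IntI mem_Collect_eq)
  then show False using m by fastforce
qed

definition BF_derivative :: "(real \<times> real \<Rightarrow> real) \<Rightarrow> real \<times> real \<Rightarrow> ((real \<times> real) \<Rightarrow>\<^sub>L real)" where
  "BF_derivative f p =
     (-2 * (px f p * px (px f) p + py f p * px (py f) p)) *\<^sub>R fst_blinfun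
   + (-2 * (px f p * py (px f) p + py f p * py (py f) p)) *\<^sub>R snd_blinfun"

lemma BF_derivative_apply:
  "BF_derivative f p v = -2 * (px f p * (fst v * px (px f) p + snd v * py (px f) p)
                              + py f p * (fst v * px (py f) p + snd v * py (py f) p))"
  by (simp add: BF_derivative_def blinfun.bilinear_simps algebra_simps)

lemma has_derivative_BF:
  assumes "px f differentiable (at p)" "py f differentiable (at p)"
  shows "(BF f has_derivative BF_derivative f p) (at p)"
proof -
  have "BF f = (\<lambda>q. 1 - px f q * px f q - py f q * py f q)"
    by (simp add: BF_def power2_eq_square fun_eq_iff)
  moreover have "((\<lambda>q. 1 - px f q * px f q - py f q * py f q) has_derivative BF_derivative f p) (at p)"
    using has_derivative_partials[OF assms(1)] has_derivative_partials[OF assms(2)]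
    by (auto intro!: derivative_eq_intros simp: BF_derivative_apply fun_eq_iff algebra_simps)
  ultimately show ?thesis by simp
qed

lemma BF_derivative_along_gradient:
  assumes "AF f p = \<phi> * (BF f p)\<^sup>2" and "py (px f) p = px (py f) p"
  shows "BF_derivative f p (px f p, py f p) = (2 * (px (px f) p + py (py f) p) - 2 * \<phi> * BF f p) * BF f p"
  using assms unfolding BF_derivative_apply AF_def BF_def fst_conv snd_conv by algebra

theorem corollary3p4:
  fixes f \<phi> :: "real \<times> real \<Rightarrow> real" and U :: "(real \<times> real) set"
  assumes "open U" and "(0, 0) \<in> U"
    and "Ck 3 f U"
    and "Ck 1 \<phi> U"
    and "f (0, 0) = 0" and "px f (0, 0) = 0" and "py f (0, 0) = 1"
    and "U \<subseteq> closure {p \<in> U. BF f p \<noteq> 0}"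
    and "\<forall>p\<in>U. AF f p - \<phi> p * (BF f p)^2 = 0"
  shows "(0, 0) \<in> closure ({p \<in> U. BF f p = 0} - {(0, 0)})"
proof (rule zero_not_isolated_along_field)
  have diff: "f differentiable (at q)" "px f differentiable (at q)" "py f differentiable (at q)"
    if "q \<in> U" for q
    using assms(3) that by (simp_all add: numeral_3_eq_3 numeral_2_eq_2)
  have cont: "continuous_on U (px f)" "continuous_on U (py f)"
    "continuous_on U (px (px f))" "continuous_on U (py (px f))"
    "continuous_on U (px (py f))" "continuous_on U (py (py f))" "continuous_on U \<phi>"
    using assms(3,4) by (simp_all add: numeral_3_eq_3 numeral_2_eq_2)
  have "py (px f) q = px (py f) q" if "q \<in> U" for q
    using py_px_eq_px_py[OF \<open>open U\<close> that] diff cont by blast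
  then show "BF_derivative f q (px f q, py f q)
      = (2 * (px (px f) q + py (py f) q) - 2 * \<phi> q * BF f q) * BF f q" if "q \<in> U" for q
    using that assms(9) by (intro BF_derivative_along_gradient) auto
  show "(BF f has_derivative BF_derivative f q) (at q)" if "q \<in> U" for q
    using diff that by (intro has_derivative_BF)
  show "continuous_on U (\<lambda>q. (px f q, py f q))"
    by (intro continuous_intros cont)
  show "continuous_on U (BF_derivative f)"
    unfolding BF_derivative_def by (intro continuous_intros cont)
  show "continuous_on U (\<lambda>q. 2 * (px (px f) q + py (py f) q) - 2 * \<phi> q * BF f q)"
    unfolding BF_def by (intro continuous_intros cont)
  show "BF f (0, 0) = 0" "(px f (0, 0), py f (0, 0)) \<noteq> 0"
    using assms(6,7) by (simp_all add: BF_def zero_prod_def)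
qed fact+

end
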